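(* Let $d \ge 2$ be an integer, $\mu \in \mathbb{S}^{d-1}$ and $\kappa \ge 0$. Let $X$ be a random vector on $\mathbb{S}^{d-1}=\{x\in\mathbb{R}^d : \|x\|_2=1\}$ with density (with respect to the surface measure on $\mathbb{S}^{d-1}$) proportional to $(1+\mu^\top x)^\kappa$, and let $T = \mu^\top X$. Then $T \overset{d}{=} 2Z - 1$ where $Z \sim \operatorname{Beta}(\alpha,\beta)$ with $\alpha = \frac{d-1}{2}+\kappa$ and $\beta = \frac{d-1}{2}$.
   Context: $\operatorname{Beta}(\alpha,\beta)$ denotes the distribution on $[0,1]$ with density $B(\alpha,\beta)^{-1} z^{\alpha-1}(1-z)^{\beta-1}$, where $B(a,b)=\Gamma(a)\Gamma(b)/\Gamma(a+b)$. The normalized distribution with density proportional to $(1+\mu^\top x)^\kappa$ on $\mathbb{S}^{d-1}$ is called the Power Spherical distribution with direction $\mu$ and concentration $\kappa$. *)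

theory Defs
  imports "HOL-Probability.Probability"
begin

text \<open>Surface measure on the unit sphere of \<open>real^'n\<close>, defined by the cone
construction: for a Borel set A of the sphere, sigma(A) = d * lambda({r x : 0 < r \<le> 1, x \<in> A}),
i.e. d times the pushforward of Lebesgue measure on the punctured unit ball under
x \<mapsto> x / norm x.  This is the standard (d-1)-dimensional surface (Hausdorff) measure.\<close>

definition sphere_measure :: "(real^'n) measure" where
  "sphere_measure =
     density
       (distr (restrict_space lborel (ball 0 1 - {0}))
              (restrict_space borel (sphere 0 1))
              (\<lambda>x. x /\<^sub>R norm x))
       (\<lambda>_. ennreal (real CARD('n)))"

definition beta_density :: "real \<Rightarrow> real \<Rightarrow> real \<Rightarrow> ennreal" where
  "beta_density a b z =
     (if 0 < z \<and> z < 1 then ennreal (z powr (a - 1) * (1 - z) powr (b - 1) / Beta a b) else 0)"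

definition beta_measure :: "real \<Rightarrow> real \<Rightarrow> real measure" where
  "beta_measure a b = density lborel (beta_density a b)"

end

theory Submission
  imports Defs
begin

text \<open>By the cone construction of the surface measure, integrating a function of the cosine
  \<open>\<mu> \<bullet> x / norm x\<close> over the sphere amounts to integrating it over the punctured unit ball.
  Lebesgue measure is invariant under plane rotations, each a product of three shears, and
  Givens rotations carry \<open>\<mu>\<close> to a basis vector \<open>u\<close>, so we may take \<open>\<mu> = u\<close>. Writing
  \<open>x = s u + y\<close> with \<open>y\<close> orthogonal to \<open>u\<close>, Fubini's theorem, the substitution
  \<open>t = s / norm x\<close> and the homogeneity of \<open>norm y\<close> show that the cosine has density
  proportional to \<open>(1 - t\<^sup>2) powr ((d - 3) / 2)\<close> on \<open>{-1<..<1}\<close>. Hence \<open>\<mu> \<bullet> X\<close> has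
  density proportional to \<open>(1 + t) powr \<kappa> * (1 - t\<^sup>2) powr ((d - 3) / 2)\<close>. An affine change
  of variables gives \<open>2 Z - 1\<close> a density of the same shape, and two probability measures with
  proportional densities coincide.\<close>

section \<open>Rotation invariance of Lebesgue measure\<close>

lemma inner_sum_Basis_subset:
  fixes z :: "'a::euclidean_space \<Rightarrow> real"
  assumes "B \<subseteq> Basis" "b \<in> Basis"
  shows "(\<Sum>b'\<in>B. z b' *\<^sub>R b') \<bullet> b = (if b \<in> B then z b else 0)"
proof -
  have "finite B" using assms(1) finite_Basis by (rule finite_subset)
  then show ?thesis
    using assms by (auto simp: inner_sum_left inner_Basis subset_eq if_distrib[of "(*) _"] cong: if_cong)
qed

lemma nn_integral_lborel_split_Basis:
  fixes u :: "'a::euclidean_space"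
  assumes u: "u \<in> Basis" and f[measurable]: "f \<in> borel_measurable borel"
  shows "(\<integral>\<^sup>+x. f x \<partial>lborel) =
    (\<integral>\<^sup>+z. (\<integral>\<^sup>+s. f (s *\<^sub>R u + (\<Sum>b\<in>Basis - {u}. z b *\<^sub>R b)) \<partial>lborel) \<partial>PiM (Basis - {u}) (\<lambda>_. lborel))"
proof -
  interpret product_sigma_finite "\<lambda>_::'a. lborel :: real measure" by standard
  have ins: "insert u (Basis - {u}) = Basis" using u by auto
  have split: "(\<Sum>b\<in>Basis. (z(u := s)) b *\<^sub>R b) = s *\<^sub>R u + (\<Sum>b\<in>Basis - {u}. z b *\<^sub>R b)" for z s
    using u by (simp add: sum.remove[of Basis u])
  have "(\<integral>\<^sup>+x. f x \<partial>lborel) = (\<integral>\<^sup>+y. f (\<Sum>b\<in>Basis. y b *\<^sub>R b) \<partial>PiM (insert u (Basis - {u})) (\<lambda>_. lborel))"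
    using u by (subst lborel_eq) (simp add: nn_integral_distr insert_absorb)
  also have "\<dots> = (\<integral>\<^sup>+z. (\<integral>\<^sup>+s. f (\<Sum>b\<in>Basis. (z(u := s)) b *\<^sub>R b) \<partial>lborel) \<partial>PiM (Basis - {u}) (\<lambda>_. lborel))"
    by (subst product_nn_integral_insert) (auto simp: ins)
  finally show ?thesis by (simp only: split)
qed

lemma inner_norm_split_Basis:
  fixes u :: "'a::euclidean_space"
  assumes u: "u \<in> Basis"
  shows "u \<bullet> (s *\<^sub>R u + (\<Sum>b\<in>Basis - {u}. z b *\<^sub>R b)) = s"
    and "norm (s *\<^sub>R u + (\<Sum>b\<in>Basis - {u}. z b *\<^sub>R b)) = sqrt (s\<^sup>2 + (\<Sum>b\<in>Basis - {u}. (z b)\<^sup>2))"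
proof -
  let ?y = "\<Sum>b\<in>Basis - {u}. z b *\<^sub>R b"
  have yb: "?y \<bullet> b = (if b \<in> Basis - {u} then z b else 0)" if "b \<in> Basis" for b
    using that by (simp add: inner_sum_Basis_subset)
  have uy: "u \<bullet> ?y = 0"
    using yb[OF u] by (simp add: inner_commute)
  have "?y \<bullet> ?y = (\<Sum>b\<in>Basis - {u}. z b * (b \<bullet> ?y))"
    by (simp add: inner_sum_left)
  also have "\<dots> = (\<Sum>b\<in>Basis - {u}. (z b)\<^sup>2)"
    using yb by (auto simp: inner_commute power2_eq_square intro!: sum.cong)
  finally have yy: "?y \<bullet> ?y = (\<Sum>b\<in>Basis - {u}. (z b)\<^sup>2)" .
  show "u \<bullet> (s *\<^sub>R u + ?y) = s"
    using u uy by (simp add: inner_add_right inner_Basis)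
  show "norm (s *\<^sub>R u + ?y) = sqrt (s\<^sup>2 + (\<Sum>b\<in>Basis - {u}. (z b)\<^sup>2))"
    using u uy yy by (simp add: norm_eq_sqrt_inner inner_add_left inner_add_right inner_Basis
        inner_commute[of ?y u] power2_eq_square)
qed

lemma lborel_invariant_comp:
  fixes f g :: "'a::euclidean_space \<Rightarrow> 'a"
  assumes [measurable]: "f \<in> borel_measurable borel" "g \<in> borel_measurable borel"
    and "distr lborel borel f = lborel" "distr lborel borel g = lborel"
  shows "distr lborel borel (f \<circ> g) = lborel"
proof -
  have "distr lborel borel (f \<circ> g) = distr (distr lborel borel g) borel f"
    by (simp add: distr_distr)
  then show ?thesis
    using assms(3,4) by simp
qed

definition shear :: "'a::euclidean_space \<Rightarrow> 'a \<Rightarrow> real \<Rightarrow> 'a \<Rightarrow> 'a" where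
  "shear u v a x = x + (a * (x \<bullet> v)) *\<^sub>R u"

lemma borel_measurable_shear [measurable]: "shear u v a \<in> borel_measurable borel"
  unfolding shear_def[abs_def] by measurable

lemma lborel_shear_invariant:
  fixes u v :: "'a::euclidean_space"
  assumes u: "u \<in> Basis" and v: "v \<in> Basis" and uv: "u \<noteq> v"
  shows "distr lborel borel (shear u v a) = lborel"
proof (rule measure_eqI)
  fix A :: "'a set" assume "A \<in> sets (distr lborel borel (shear u v a))"
  then have [measurable]: "A \<in> sets borel" by simp
  let ?y = "\<lambda>z. \<Sum>b\<in>Basis - {u}. z b *\<^sub>R b"
  have "(s *\<^sub>R u + ?y z) \<bullet> v = z v" for s z
    using u v uv by (simp add: inner_add_left inner_sum_Basis_subset inner_Basis)
  then have shear_split: "shear u v a (s *\<^sub>R u + ?y z) = (a * z v + s) *\<^sub>R u + ?y z" for s z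
    by (simp add: shear_def algebra_simps)
  have "emeasure (distr lborel borel (shear u v a)) A = (\<integral>\<^sup>+x. indicator A (shear u v a x) \<partial>lborel)"
    by (simp add: nn_integral_distr flip: nn_integral_indicator)
  also have "\<dots> = (\<integral>\<^sup>+z. (\<integral>\<^sup>+s. indicator A (shear u v a (s *\<^sub>R u + ?y z)) \<partial>lborel) \<partial>PiM (Basis - {u}) (\<lambda>_. lborel))"
    using u by (rule nn_integral_lborel_split_Basis) measurable
  also have "\<dots> = (\<integral>\<^sup>+z. (\<integral>\<^sup>+s. indicator A (s *\<^sub>R u + ?y z) \<partial>lborel) \<partial>PiM (Basis - {u}) (\<lambda>_. lborel))"
  proof (rule nn_integral_cong)
    fix z :: "'a \<Rightarrow> real"
    show "(\<integral>\<^sup>+s. indicator A (shear u v a (s *\<^sub>R u + ?y z)) \<partial>lborel) = (\<integral>\<^sup>+s. indicator A (s *\<^sub>R u + ?y z) \<partial>lborel)"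
      using nn_integral_real_affine[where f="\<lambda>s. indicator A (s *\<^sub>R u + ?y z)" and c=1 and t="a * z v"]
      by (simp add: shear_split)
  qed
  also have "\<dots> = (\<integral>\<^sup>+x. indicator A x \<partial>lborel)"
    using u by (rule nn_integral_lborel_split_Basis[symmetric]) measurable
  finally show "emeasure (distr lborel borel (shear u v a)) A = emeasure lborel A"
    by simp
qed simp

definition plane_rotation :: "'a::euclidean_space \<Rightarrow> 'a \<Rightarrow> real \<Rightarrow> real \<Rightarrow> 'a \<Rightarrow> 'a" where
  "plane_rotation u v c s x =
     x + ((c - 1) * (x \<bullet> u) - s * (x \<bullet> v)) *\<^sub>R u + (s * (x \<bullet> u) + (c - 1) * (x \<bullet> v)) *\<^sub>R v"

lemma plane_rotation_inner_Basis:
  assumes "u \<in> Basis" "v \<in> Basis" "b \<in> Basis"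
  shows "plane_rotation u v c s x \<bullet> b = x \<bullet> b
    + (if b = u then (c - 1) * (x \<bullet> u) - s * (x \<bullet> v) else 0)
    + (if b = v then s * (x \<bullet> u) + (c - 1) * (x \<bullet> v) else 0)"
  using assms by (auto simp: plane_rotation_def inner_add_left inner_Basis)

lemma orthogonal_transformation_plane_rotation:
  fixes u v :: "'a::euclidean_space"
  assumes u: "u \<in> Basis" and v: "v \<in> Basis" and uv: "u \<noteq> v" and cs: "c\<^sup>2 + s\<^sup>2 = 1"
  shows "orthogonal_transformation (plane_rotation u v c s)"
  unfolding orthogonal_transformation
proof
  show "linear (plane_rotation u v c s)"
    by (rule linearI) (simp_all add: plane_rotation_def inner_add_left algebra_simps)
  have uv_inner: "u \<bullet> u = 1" "v \<bullet> v = 1" "u \<bullet> v = 0" "v \<bullet> u = 0"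
    using u v uv by (auto simp: inner_Basis)
  show "\<forall>x. norm (plane_rotation u v c s x) = norm x"
  proof
    fix x :: 'a
    define p q where "p = x \<bullet> u" and "q = x \<bullet> v"
    have pq: "u \<bullet> x = p" "v \<bullet> x = q"
      by (simp_all add: p_def q_def inner_commute)
    have "plane_rotation u v c s x \<bullet> plane_rotation u v c s x
        = x \<bullet> x + ((c*p - s*q)\<^sup>2 + (s*p + c*q)\<^sup>2 - p\<^sup>2 - q\<^sup>2)"
      unfolding plane_rotation_def p_def[symmetric] q_def[symmetric]
      by (simp add: inner_add_left inner_add_right uv_inner pq p_def[symmetric] q_def[symmetric]
          power2_eq_square algebra_simps)
    also have "(c*p - s*q)\<^sup>2 + (s*p + c*q)\<^sup>2 - p\<^sup>2 - q\<^sup>2 = (c\<^sup>2 + s\<^sup>2 - 1) * (p\<^sup>2 + q\<^sup>2)"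
      by (simp add: power2_eq_square algebra_simps)
    finally show "norm (plane_rotation u v c s x) = norm x"
      using cs by (simp add: norm_eq_sqrt_inner)
  qed
qed

lemma borel_measurable_plane_rotation [measurable]: "plane_rotation u v c s \<in> borel_measurable borel"
  unfolding plane_rotation_def by measurable

text \<open>A rotation by an angle with cosine \<open>c \<noteq> -1\<close> is the product of three shears, whose
  coefficients are given by the tangent \<open>s / (1 + c)\<close> of the half angle.\<close>

lemma plane_rotation_eq_shears:
  fixes u v :: "'a::euclidean_space"
  assumes u: "u \<in> Basis" and v: "v \<in> Basis" and uv: "u \<noteq> v" and cs: "c\<^sup>2 + s\<^sup>2 = 1" and c: "c \<noteq> -1"
  shows "plane_rotation u v c s = shear u v (- (s / (1 + c))) \<circ> shear v u s \<circ> shear u v (- (s / (1 + c)))"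
proof
  fix x :: 'a
  define t p q where "t = s / (1 + c)" and "p = x \<bullet> u" and "q = x \<bullet> v"
  have uv_inner: "u \<bullet> u = 1" "v \<bullet> v = 1" "u \<bullet> v = 0" "v \<bullet> u = 0"
    using u v uv by (auto simp: inner_Basis)
  have double: "(a * 2) *\<^sub>R w = a *\<^sub>R w + a *\<^sub>R w" "(a * (b * 2)) *\<^sub>R w = (a * b) *\<^sub>R w + (a * b) *\<^sub>R w"
    for a b :: real and w :: 'a
    by (simp_all add: scaleR_add_left[symmetric])
  have ts: "t * s = 1 - c"
  proof -
    have "s\<^sup>2 = (1 - c) * (1 + c)" using cs by (simp add: algebra_simps power2_eq_square)
    then show ?thesis using c by (simp add: t_def power2_eq_square field_simps)
  qed
  have tc: "t * (1 + c) = s"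
    unfolding t_def using c by (simp add: add_eq_0_iff)
  have "(shear u v (- t) \<circ> shear v u s \<circ> shear u v (- t)) x
      = x + (- t * q) *\<^sub>R u + (s * (p - t * q)) *\<^sub>R v + (- t * (q + s * (p - t * q))) *\<^sub>R u"
    unfolding shear_def p_def q_def by (simp add: inner_add_left uv_inner algebra_simps double)
  also have "\<dots> = x + ((- t * q) + (- t * (q + s * (p - t * q)))) *\<^sub>R u + (s * (p - t * q)) *\<^sub>R v"
    by (simp add: algebra_simps double)
  also have "(- t * q) + (- t * (q + s * (p - t * q))) = (c - 1) * p - s * q"
  proof -
    have "(- t * q) + (- t * (q + s * (p - t * q))) = - (t * s) * p + t * q * (t * s - 2)"
      by (simp add: algebra_simps)
    also have "\<dots> = (c - 1) * p - (t * (1 + c)) * q"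
      by (simp only: ts) (simp add: algebra_simps)
    finally show ?thesis by (simp add: tc)
  qed
  also have "s * (p - t * q) = s * p + (c - 1) * q"
  proof -
    have "s * (p - t * q) = s * p - (t * s) * q" by (simp add: algebra_simps)
    then show ?thesis by (simp only: ts) (simp add: algebra_simps)
  qed
  finally show "plane_rotation u v c s x = (shear u v (- (s / (1 + c))) \<circ> shear v u s \<circ> shear u v (- (s / (1 + c)))) x"
    unfolding plane_rotation_def p_def q_def t_def by simp
qed

lemma plane_rotation_half_turn:
  fixes u v :: "'a::euclidean_space"
  assumes u: "u \<in> Basis" and v: "v \<in> Basis" and uv: "u \<noteq> v"
  shows "plane_rotation u v (-1) 0 = plane_rotation u v 0 1 \<circ> plane_rotation u v 0 1"
proof
  fix x :: 'a
  have uv_inner: "u \<bullet> u = 1" "v \<bullet> v = 1" "u \<bullet> v = 0" "v \<bullet> u = 0"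
    using u v uv by (auto simp: inner_Basis)
  have double: "(a * 2) *\<^sub>R w = a *\<^sub>R w + a *\<^sub>R w" for a :: real and w :: 'a
    by (simp add: scaleR_add_left[symmetric])
  show "plane_rotation u v (-1) 0 x = (plane_rotation u v 0 1 \<circ> plane_rotation u v 0 1) x"
    unfolding plane_rotation_def by (simp add: inner_add_left uv_inner algebra_simps double)
qed

lemma lborel_plane_rotation_invariant:
  fixes u v :: "'a::euclidean_space"
  assumes u: "u \<in> Basis" and v: "v \<in> Basis" and uv: "u \<noteq> v" and cs: "c\<^sup>2 + s\<^sup>2 = 1"
  shows "distr lborel borel (plane_rotation u v c s) = lborel"
proof -
  have shears: "distr lborel borel (plane_rotation u v c s) = lborel"
    if "c\<^sup>2 + s\<^sup>2 = 1" "c \<noteq> -1" for c s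
    using that lborel_shear_invariant[OF u v uv] lborel_shear_invariant[OF v u uv[symmetric]]
    by (simp add: plane_rotation_eq_shears[OF u v uv] lborel_invariant_comp)
  show ?thesis
  proof (cases "c = -1")
    case True
    then have "s = 0" using cs by (simp add: power2_eq_square)
    with True show ?thesis
      using shears[of 0 1] by (simp add: plane_rotation_half_turn[OF u v uv] lborel_invariant_comp)
  qed (use shears cs in auto)
qed

lemma borel_measurable_orthogonal_transformation:
  fixes g :: "'a::euclidean_space \<Rightarrow> 'a"
  shows "orthogonal_transformation g \<Longrightarrow> g \<in> borel_measurable borel"
  by (intro borel_measurable_continuous_onI linear_continuous_on)
     (metis orthogonal_transformation_linear linear_conv_bounded_linear)

definition lborel_preserving_orthogonal :: "('a::euclidean_space \<Rightarrow> 'a) \<Rightarrow> bool" where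
  "lborel_preserving_orthogonal g \<longleftrightarrow> orthogonal_transformation g \<and> distr lborel borel g = lborel"

lemma lborel_preserving_orthogonal_id: "lborel_preserving_orthogonal (\<lambda>x. x)"
  by (simp add: lborel_preserving_orthogonal_def distr_id2)

lemma lborel_preserving_orthogonal_comp:
  "lborel_preserving_orthogonal f \<Longrightarrow> lborel_preserving_orthogonal g \<Longrightarrow> lborel_preserving_orthogonal (f \<circ> g)"
  unfolding lborel_preserving_orthogonal_def
  by (simp add: orthogonal_transformation_compose lborel_invariant_comp borel_measurable_orthogonal_transformation)

lemma lborel_preserving_orthogonal_inv:
  assumes "lborel_preserving_orthogonal g"
  shows "lborel_preserving_orthogonal (inv g)"
proof -
  have g: "orthogonal_transformation g" "distr lborel borel g = lborel"
    using assms by (simp_all add: lborel_preserving_orthogonal_def)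
  have [measurable]: "g \<in> borel_measurable borel" "inv g \<in> borel_measurable borel"
    using g(1) orthogonal_transformation_inv by (auto intro: borel_measurable_orthogonal_transformation)
  have "distr lborel borel (inv g) = distr (distr lborel borel g) borel (inv g)"
    by (simp add: g(2))
  also have "\<dots> = distr lborel borel (inv g \<circ> g)"
    by (simp add: distr_distr)
  also have "inv g \<circ> g = id"
    using g(1) orthogonal_transformation_inj inv_o_cancel by blast
  finally show ?thesis
    using g(1) by (simp add: lborel_preserving_orthogonal_def orthogonal_transformation_inv id_def distr_id2)
qed

lemma lborel_preserving_orthogonal_plane_rotation:
  fixes u v :: "'a::euclidean_space"
  assumes "u \<in> Basis" "v \<in> Basis" "u \<noteq> v" "c\<^sup>2 + s\<^sup>2 = 1"
  shows "lborel_preserving_orthogonal (plane_rotation u v c s)"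
  using assms by (simp add: lborel_preserving_orthogonal_def orthogonal_transformation_plane_rotation
      lborel_plane_rotation_invariant)

lemma givens_rotation_exists:
  fixes m u v :: "'a::euclidean_space"
  assumes u: "u \<in> Basis" and v: "v \<in> Basis" and uv: "u \<noteq> v" and mv: "m \<bullet> v \<noteq> 0"
  obtains c s where "c\<^sup>2 + s\<^sup>2 = 1" "plane_rotation u v c s m \<bullet> v = 0"
proof
  define \<rho> where "\<rho> = sqrt ((m \<bullet> u)\<^sup>2 + (m \<bullet> v)\<^sup>2)"
  have "\<rho> > 0" using mv by (simp add: \<rho>_def add_nonneg_pos)
  moreover have "\<rho>\<^sup>2 = (m \<bullet> u)\<^sup>2 + (m \<bullet> v)\<^sup>2" by (simp add: \<rho>_def)
  ultimately show "(m \<bullet> u / \<rho>)\<^sup>2 + (- (m \<bullet> v) / \<rho>)\<^sup>2 = 1"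
    using mv by (simp add: power_divide add_divide_distrib[symmetric])
  show "plane_rotation u v (m \<bullet> u / \<rho>) (- (m \<bullet> v) / \<rho>) m \<bullet> v = 0"
    using u v uv by (simp add: plane_rotation_inner_Basis algebra_simps)
qed

lemma lborel_preserving_orthogonal_onto_axis:
  fixes m u v :: "'a::euclidean_space"
  assumes u: "u \<in> Basis" and v: "v \<in> Basis" "u \<noteq> v" and m: "m = r *\<^sub>R u"
  obtains g where "lborel_preserving_orthogonal g" "g (norm m *\<^sub>R u) = m"
proof (cases "r \<ge> 0")
  case True
  with u m have "norm m *\<^sub>R u = m" by simp
  then show ?thesis
    using lborel_preserving_orthogonal_id that by blast
next
  case False
  with u m have "norm m *\<^sub>R u = - m" by simp
  moreover have "plane_rotation u v (-1) 0 (- m) = m"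
    using u v m by (simp add: plane_rotation_def inner_Basis algebra_simps flip: scaleR_add_left)
  ultimately show ?thesis
    using lborel_preserving_orthogonal_plane_rotation[OF u v, of "-1" 0] that by fastforce
qed

text \<open>Givens rotations in the planes spanned by \<open>u\<close> and the other basis vectors successively
  annihilate the coordinates of \<open>m\<close> orthogonal to \<open>u\<close>.\<close>

lemma lborel_preserving_orthogonal_onto:
  fixes m u :: "'a::euclidean_space"
  assumes u: "u \<in> Basis" and dim: "DIM('a) \<ge> 2"
  obtains g where "lborel_preserving_orthogonal g" "g (norm m *\<^sub>R u) = m"
proof -
  obtain v where v: "v \<in> Basis" "u \<noteq> v"
    using dim card_mono[of "{u}" "Basis :: 'a set"] by fastforce
  have "\<exists>g. lborel_preserving_orthogonal g \<and> g (norm m *\<^sub>R u) = m"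
    if "card {b\<in>Basis. b \<noteq> u \<and> m \<bullet> b \<noteq> 0} = n" for n and m :: 'a
    using that
  proof (induction n arbitrary: m)
    case 0
    then have "m \<bullet> b = ((m \<bullet> u) *\<^sub>R u) \<bullet> b" if "b \<in> Basis" for b
      using u that by (cases "b = u") (auto simp: inner_Basis)
    then have "m = (m \<bullet> u) *\<^sub>R u"
      by (rule euclidean_eqI)
    then show ?case
      using lborel_preserving_orthogonal_onto_axis[OF u v] by metis
  next
    case (Suc n)
    then obtain j where j: "j \<in> Basis" "u \<noteq> j" "m \<bullet> j \<noteq> 0"
      by (metis (mono_tags, lifting) card.empty Zero_not_Suc empty_Collect_eq)
    then obtain c s where cs: "c\<^sup>2 + s\<^sup>2 = 1" and zero: "plane_rotation u j c s m \<bullet> j = 0"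
      using givens_rotation_exists[OF u] by blast
    define R where "R = plane_rotation u j c s"
    have R: "lborel_preserving_orthogonal R"
      unfolding R_def using u j cs by (simp add: lborel_preserving_orthogonal_plane_rotation)
    have "{b\<in>Basis. b \<noteq> u \<and> R m \<bullet> b \<noteq> 0} = {b\<in>Basis. b \<noteq> u \<and> m \<bullet> b \<noteq> 0} - {j}"
      using u j zero by (auto simp: R_def plane_rotation_inner_Basis split: if_split_asm)
    then have "card {b\<in>Basis. b \<noteq> u \<and> R m \<bullet> b \<noteq> 0} = n"
      using Suc.prems j by (simp add: card_Diff_singleton)
    then obtain g where g: "lborel_preserving_orthogonal g" and gRm: "g (norm (R m) *\<^sub>R u) = R m"
      using Suc.IH by blast
    have "orthogonal_transformation R"
      using R by (simp add: lborel_preserving_orthogonal_def)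
    then have "(inv R \<circ> g) (norm m *\<^sub>R u) = m"
      using gRm by (simp add: orthogonal_transformation_norm orthogonal_transformation_inj)
    moreover have "lborel_preserving_orthogonal (inv R \<circ> g)"
      using R g by (simp add: lborel_preserving_orthogonal_comp lborel_preserving_orthogonal_inv)
    ultimately show ?case by blast
  qed
  then show ?thesis
    using that by blast
qed

section \<open>The cosine of the angle with a basis vector\<close>

lemma nn_integral_PiM_lborel_scale:
  fixes I :: "'i set" and c :: real
  assumes "finite I" "c > 0" and "F \<in> borel_measurable (PiM I (\<lambda>_. lborel))"
  shows "(\<integral>\<^sup>+y. F (\<lambda>i\<in>I. c * y i) \<partial>PiM I (\<lambda>_. lborel)) =
      ennreal ((1/c)^card I) * (\<integral>\<^sup>+y. F y \<partial>PiM I (\<lambda>_. lborel :: real measure))"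
  using assms(1,3)
proof (induction I arbitrary: F rule: finite_induct)
  case empty
  show ?case
    by (simp add: PiM_empty nn_integral_count_space_finite)
next
  case (insert i I F)
  interpret product_sigma_finite "\<lambda>_::'i. lborel :: real measure" by standard
  note Fm[measurable] = insert.prems
  let ?P = "PiM I (\<lambda>_. lborel :: real measure)"
  define K where "K w = (\<integral>\<^sup>+s. F (w(i:=s)) \<partial>lborel)" for w
  have Km[measurable]: "K \<in> borel_measurable ?P"
    unfolding K_def using insert.hyps by measurable
  have "(\<integral>\<^sup>+y. F (\<lambda>j\<in>insert i I. c * y j) \<partial>PiM (insert i I) (\<lambda>_. lborel))
      = (\<integral>\<^sup>+z. (\<integral>\<^sup>+s. F (\<lambda>j\<in>insert i I. c * (z(i:=s)) j) \<partial>lborel) \<partial>?P)"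
    using insert.hyps by (subst product_nn_integral_insert) auto
  also have "\<dots> = (\<integral>\<^sup>+z. (\<integral>\<^sup>+s. F ((\<lambda>j\<in>I. c * z j)(i := c * s)) \<partial>lborel) \<partial>?P)"
  proof (rule nn_integral_cong)
    fix z assume z: "z \<in> space ?P"
    have "(\<lambda>j\<in>insert i I. c * (z(i:=s)) j) = (\<lambda>j\<in>I. c * z j)(i := c * s)" for s
      using insert.hyps by (auto simp: restrict_def fun_eq_iff)
    then show "(\<integral>\<^sup>+s. F (\<lambda>j\<in>insert i I. c * (z(i:=s)) j) \<partial>lborel) = (\<integral>\<^sup>+s. F ((\<lambda>j\<in>I. c * z j)(i := c * s)) \<partial>lborel)"
      by simp
  qed
  also have "\<dots> = (\<integral>\<^sup>+z. ennreal (1/c) * K (\<lambda>j\<in>I. c * z j) \<partial>?P)"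
  proof (rule nn_integral_cong)
    fix z assume z: "z \<in> space ?P"
    have w: "(\<lambda>j\<in>I. c * z j) \<in> space ?P" by (auto simp: space_PiM)
    have [measurable]: "(\<lambda>s. F ((\<lambda>j\<in>I. c * z j)(i := s))) \<in> borel_measurable borel"
      using measurable_comp[OF measurable_component_update[OF w insert.hyps(2)] Fm]
      by (simp add: comp_def)
    have "K (\<lambda>j\<in>I. c * z j) = ennreal \<bar>c\<bar> * (\<integral>\<^sup>+s. F ((\<lambda>j\<in>I. c * z j)(i := 0 + c * s)) \<partial>lborel)"
      unfolding K_def using \<open>c > 0\<close> by (intro nn_integral_real_affine) auto
    then have "(\<integral>\<^sup>+s. F ((\<lambda>j\<in>I. c * z j)(i := c * s)) \<partial>lborel) = ennreal (1/c) * K (\<lambda>j\<in>I. c * z j)"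
      using \<open>c > 0\<close> by (simp add: ennreal_mult'[symmetric] mult.assoc[symmetric] ennreal_1[symmetric] del: ennreal_1) simp
    then show "(\<integral>\<^sup>+s. F ((\<lambda>j\<in>I. c * z j)(i := c * s)) \<partial>lborel) = ennreal (1/c) * K (\<lambda>j\<in>I. c * z j)" .
  qed
  also have "\<dots> = ennreal (1/c) * (\<integral>\<^sup>+z. K (\<lambda>j\<in>I. c * z j) \<partial>?P)"
    by (subst nn_integral_cmult) auto
  also have "\<dots> = ennreal (1/c) * (ennreal ((1/c)^card I) * (\<integral>\<^sup>+z. K z \<partial>?P))"
    by (subst insert.IH[OF Km]) simp
  also have "(\<integral>\<^sup>+z. K z \<partial>?P) = (\<integral>\<^sup>+y. F y \<partial>PiM (insert i I) (\<lambda>_. lborel))"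
    unfolding K_def using insert.hyps by (subst product_nn_integral_insert) auto
  finally show ?case
    using insert.hyps \<open>c > 0\<close> by (simp add: ennreal_mult'[symmetric] mult.assoc[symmetric])
qed

lemma has_real_derivative_div_sqrt_square_add:
  fixes q :: real
  assumes q: "q > 0"
  shows "((\<lambda>s. s / sqrt (s\<^sup>2 + q)) has_real_derivative q / ((s\<^sup>2 + q) * sqrt (s\<^sup>2 + q))) (at s)"
proof -
  have S: "s\<^sup>2 + q > 0"
    using q by (simp add: add_nonneg_pos)
  then have "((\<lambda>s. s / sqrt (s\<^sup>2 + q)) has_real_derivative
      (1 * sqrt (s\<^sup>2 + q) - s * ((2 * s) * inverse (sqrt (s\<^sup>2 + q)) / 2)) / (sqrt (s\<^sup>2 + q))\<^sup>2) (at s)"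
    by (auto intro!: derivative_eq_intros)
  also have "(1 * sqrt (s\<^sup>2 + q) - s * ((2 * s) * inverse (sqrt (s\<^sup>2 + q)) / 2)) / (sqrt (s\<^sup>2 + q))\<^sup>2
      = q / ((s\<^sup>2 + q) * sqrt (s\<^sup>2 + q))"
    using S by (simp add: field_simps power2_eq_square)
  finally show ?thesis .
qed

text \<open>The substitution \<open>t = s / sqrt (s\<^sup>2 + q)\<close> turns the coordinate \<open>s\<close> of a point at squared
  distance \<open>q\<close> from a line into the cosine of its angle with that line.\<close>

lemma nn_integral_cosine_substitution:
  fixes G :: "real \<Rightarrow> real" and q :: real
  assumes G[measurable]: "G \<in> borel_measurable borel" and G0: "\<And>t. 0 \<le> G t" and q: "q > 0"
  shows "(\<integral>\<^sup>+s. ennreal (indicator {s. s\<^sup>2 + q < 1} s * G (s / sqrt (s\<^sup>2 + q))) \<partial>lborel) =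
         (\<integral>\<^sup>+t. ennreal (if q < 1 - t\<^sup>2 then G t * sqrt q / ((1 - t\<^sup>2) * sqrt (1 - t\<^sup>2)) else 0) \<partial>lborel)"
proof (cases "q < 1")
  case False
  then have "\<not> s\<^sup>2 + q < 1" "\<not> q < 1 - s\<^sup>2" for s
    using zero_le_power2[of s] by linarith+
  then show ?thesis by (simp add: indicator_def)
next
  case True
  define a where "a = sqrt (1 - q)"
  define g where "g s = s / sqrt (s\<^sup>2 + q)" for s
  define g' where "g' s = q / ((s\<^sup>2 + q) * sqrt (s\<^sup>2 + q))" for s
  define f where "f t = G t * sqrt q / ((1 - t\<^sup>2) * sqrt (1 - t\<^sup>2))" for t
  have S: "s\<^sup>2 + q > 0" for s
    using q by (simp add: add_nonneg_pos)
  then have S_ne: "s\<^sup>2 + q \<noteq> 0" for s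
    by (metis less_irrefl)
  have a: "a > 0" "a\<^sup>2 = 1 - q" "g a = a" "g (-a) = -a"
    using True by (simp_all add: a_def g_def)
  have iff: "s\<^sup>2 + q < 1 \<longleftrightarrow> s \<in> {-a<..<a}" "q < 1 - s\<^sup>2 \<longleftrightarrow> s \<in> {-a<..<a}" for s
    using a(1,2) abs_le_square_iff[of a s] by (auto simp: abs_less_iff)
  have fg: "f (g s) * g' s = G (g s)" for s
  proof -
    define S where "S = s\<^sup>2 + q"
    have S0: "S > 0"
      using S[of s] by (simp add: S_def)
    have "1 - (g s)\<^sup>2 = q / S"
      using S[of s] by (simp add: S_def g_def power_divide field_simps)
    then have "f (g s) * g' s = G (g s) * (sqrt q / (q / S * (sqrt q / sqrt S)) * (q / (S * sqrt S)))"
      by (simp add: f_def g'_def S_def real_sqrt_divide)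
    also have "sqrt q / (q / S * (sqrt q / sqrt S)) * (q / (S * sqrt S)) = 1"
      using S0 q by (simp add: field_simps)
    finally show ?thesis by simp
  qed
  have AE: "AE s in lborel. s \<notin> {-a, a}"
    by (intro AE_not_in countable_imp_null_set_lborel) auto
  have "(\<integral>\<^sup>+s. ennreal (indicator {s. s\<^sup>2 + q < 1} s * G (s / sqrt (s\<^sup>2 + q))) \<partial>lborel)
      = (\<integral>\<^sup>+s. ennreal (f (g s) * g' s * indicator {-a..a} s) \<partial>lborel)"
    by (intro nn_integral_cong_AE eventually_mono[OF AE]) (auto simp: fg iff indicator_def g_def[symmetric])
  also have "\<dots> = (\<integral>\<^sup>+t. ennreal (f t * indicator {g (-a)..g a} t) \<partial>lborel)"
    using a(1) has_real_derivative_div_sqrt_square_add[OF q] S q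
    by (intro nn_integral_substitution[symmetric])
       (auto simp: f_def g_def[abs_def] g'_def S_ne set_borel_measurable_def intro!: continuous_intros)
  also have "\<dots> = (\<integral>\<^sup>+t. ennreal (if q < 1 - t\<^sup>2 then G t * sqrt q / ((1 - t\<^sup>2) * sqrt (1 - t\<^sup>2)) else 0) \<partial>lborel)"
    by (intro nn_integral_cong_AE eventually_mono[OF AE]) (auto simp: a iff indicator_def f_def)
  finally show ?thesis .
qed

lemma AE_PiM_lborel_sum_squares_pos:
  fixes I :: "'i set"
  assumes I: "finite I" "I \<noteq> {}"
  shows "AE y in PiM I (\<lambda>_. lborel :: real measure). 0 < (\<Sum>i\<in>I. (y i)\<^sup>2)"
proof -
  interpret product_sigma_finite "\<lambda>_::'i. lborel :: real measure" by standard
  obtain i0 where i0: "i0 \<in> I" using I by auto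
  define A where "A i = (if i = i0 then {0} else UNIV :: real set)" for i
  have "emeasure (PiM I (\<lambda>_. lborel)) (Pi\<^sub>E I A) = (\<Prod>i\<in>I. emeasure lborel (A i))"
    using I by (intro emeasure_PiM) (auto simp: A_def)
  also have "\<dots> = 0" using I i0 by (intro prod_zero bexI[of _ i0]) (auto simp: A_def)
  finally have N: "Pi\<^sub>E I A \<in> null_sets (PiM I (\<lambda>_. lborel))"
    using I by (intro null_setsI) (auto simp: A_def intro!: sets_PiM_I_finite)
  show ?thesis
  proof (rule AE_I'[OF N], intro subsetI)
    fix y assume "y \<in> {y \<in> space (PiM I (\<lambda>_. lborel :: real measure)). \<not> 0 < (\<Sum>i\<in>I. (y i)\<^sup>2)}"
    then have y: "y \<in> space (PiM I (\<lambda>_. lborel :: real measure))" and nz: "\<not> 0 < (\<Sum>i\<in>I. (y i)\<^sup>2)" by auto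
    have "(\<Sum>i\<in>I. (y i)\<^sup>2) = 0" using nz by (simp add: not_less antisym sum_nonneg)
    then have "\<forall>i\<in>I. (y i)\<^sup>2 = 0" using I sum_nonneg_eq_0_iff[of I "\<lambda>i. (y i)\<^sup>2"] by simp
    then show "y \<in> Pi\<^sub>E I A" using y by (auto simp: A_def space_PiM PiE_def)
  qed
qed

lemma sqrt_power_div_eq_powr:
  fixes t :: real and n :: nat
  assumes t: "\<bar>t\<bar> < 1"
  shows "sqrt (1 - t\<^sup>2) ^ n / ((1 - t\<^sup>2) * sqrt (1 - t\<^sup>2)) = (1 - t\<^sup>2) powr ((real n - 3) / 2)"
proof -
  define x where "x = 1 - t\<^sup>2"
  have x: "x > 0" using t unfolding x_def by (simp add: abs_square_less_1)
  define r where "r = sqrt x"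
  have r: "r > 0" using x by (simp add: r_def)
  have rx: "r = x powr (1/2)" using x by (simp add: r_def powr_half_sqrt)
  have xr: "x = r\<^sup>2" using x by (simp add: r_def)
  have A: "x * r = r powr 3" using powr_realpow[OF r, of 3] by (simp add: xr power2_eq_square power3_eq_cube)
  have B: "r ^ n = r powr (real n)" using r by (simp add: powr_realpow)
  have "r ^ n / (x * r) = r powr (real n - 3)"
    by (simp only: A B powr_diff)
  also have "\<dots> = x powr ((real n - 3) / 2)"
    unfolding rx using x by (simp add: powr_powr)
  finally show ?thesis by (simp add: x_def r_def)
qed

definition ball_norm_integral :: "'i set \<Rightarrow> ennreal" where
  "ball_norm_integral I =
     (\<integral>\<^sup>+y. ennreal (if (\<Sum>i\<in>I. (y i)\<^sup>2) < 1 then sqrt (\<Sum>i\<in>I. (y i)\<^sup>2) else 0) \<partial>PiM I (\<lambda>_. lborel))"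

lemma ball_norm_integral_scale:
  fixes I :: "'i set"
  assumes I: "finite I" and \<rho>: "\<rho> > 0"
  shows "(\<integral>\<^sup>+y. ennreal (if (\<Sum>i\<in>I. (y i)\<^sup>2) < \<rho>\<^sup>2 then sqrt (\<Sum>i\<in>I. (y i)\<^sup>2) else 0) \<partial>PiM I (\<lambda>_. lborel))
         = ennreal (\<rho> ^ (card I + 1)) * ball_norm_integral I"
proof -
  define F where "F r y = ennreal (if (\<Sum>i\<in>I. (y i)\<^sup>2) < r\<^sup>2 then sqrt (\<Sum>i\<in>I. (y i)\<^sup>2) else 0)"
    for r and y :: "'i \<Rightarrow> real"
  have [measurable]: "F r \<in> borel_measurable (PiM I (\<lambda>_. lborel))" for r
    unfolding F_def by measurable
  have F_scale: "F \<rho> (\<lambda>i\<in>I. \<rho> * y i) = ennreal \<rho> * F 1 y" for y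
  proof -
    have "(\<Sum>i\<in>I. ((\<lambda>i\<in>I. \<rho> * y i) i)\<^sup>2) = \<rho>\<^sup>2 * (\<Sum>i\<in>I. (y i)\<^sup>2)"
      by (simp add: sum_distrib_left power_mult_distrib)
    moreover have "(\<Sum>i\<in>I. (y i)\<^sup>2) \<ge> 0"
      by (simp add: sum_nonneg)
    ultimately show ?thesis
      using \<rho> by (simp add: F_def real_sqrt_mult ennreal_mult)
  qed
  have "ennreal ((1/\<rho>) ^ card I) * (\<integral>\<^sup>+y. F \<rho> y \<partial>PiM I (\<lambda>_. lborel))
      = (\<integral>\<^sup>+y. F \<rho> (\<lambda>i\<in>I. \<rho> * y i) \<partial>PiM I (\<lambda>_. lborel))"
    using I \<rho> by (rule nn_integral_PiM_lborel_scale[symmetric]) measurable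
  also have "\<dots> = (\<integral>\<^sup>+y. ennreal \<rho> * F 1 y \<partial>PiM I (\<lambda>_. lborel))"
    by (simp only: F_scale)
  also have "\<dots> = ennreal \<rho> * ball_norm_integral I"
    by (subst nn_integral_cmult) (simp_all add: ball_norm_integral_def F_def[abs_def])
  finally have "ennreal (\<rho> ^ card I) * (ennreal ((1/\<rho>) ^ card I) * (\<integral>\<^sup>+y. F \<rho> y \<partial>PiM I (\<lambda>_. lborel)))
      = ennreal (\<rho> ^ card I) * (ennreal \<rho> * ball_norm_integral I)"
    by simp
  then show ?thesis
    using \<rho> by (simp add: F_def mult.assoc[symmetric] ennreal_mult'[symmetric] power_mult_distrib[symmetric]
      mult.commute[of "\<rho> ^ card I" \<rho>])
qed

lemma nn_integral_PiM_cone_section: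
  fixes I :: "'i set" and t g :: real
  assumes I: "finite I" and g: "g \<ge> 0"
  shows "(\<integral>\<^sup>+z. ennreal (if (\<Sum>i\<in>I. (z i)\<^sup>2) < 1 - t\<^sup>2
             then g * sqrt (\<Sum>i\<in>I. (z i)\<^sup>2) / ((1 - t\<^sup>2) * sqrt (1 - t\<^sup>2)) else 0) \<partial>PiM I (\<lambda>_. lborel))
       = ennreal (g * (indicator {-1<..<1} t * (1 - t\<^sup>2) powr ((real (card I) - 2) / 2))) * ball_norm_integral I"
proof (cases "\<bar>t\<bar> < 1")
  case False
  then have "\<not> (\<Sum>i\<in>I. (z i)\<^sup>2) < 1 - t\<^sup>2" for z
    using sum_nonneg[of I "\<lambda>i. (z i)\<^sup>2"] abs_square_less_1[of t] by fastforce
  moreover have "t \<notin> {-1<..<1}"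
    using False by auto
  ultimately show ?thesis by simp
next
  case True
  define \<rho> where "\<rho> = sqrt (1 - t\<^sup>2)"
  have t2: "1 - t\<^sup>2 > 0"
    using True by (simp add: abs_square_less_1)
  then have \<rho>: "\<rho> > 0" "\<rho>\<^sup>2 = 1 - t\<^sup>2"
    by (simp_all add: \<rho>_def)
  define k where "k = g / ((1 - t\<^sup>2) * \<rho>)"
  have k: "k \<ge> 0"
    using g t2 \<rho> by (simp add: k_def)
  have "(\<integral>\<^sup>+z. ennreal (if (\<Sum>i\<in>I. (z i)\<^sup>2) < 1 - t\<^sup>2
             then g * sqrt (\<Sum>i\<in>I. (z i)\<^sup>2) / ((1 - t\<^sup>2) * sqrt (1 - t\<^sup>2)) else 0) \<partial>PiM I (\<lambda>_. lborel))
      = (\<integral>\<^sup>+z. ennreal k * ennreal (if (\<Sum>i\<in>I. (z i)\<^sup>2) < \<rho>\<^sup>2 then sqrt (\<Sum>i\<in>I. (z i)\<^sup>2) else 0)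
          \<partial>PiM I (\<lambda>_. lborel))"
  proof (rule nn_integral_cong)
    fix z :: "'i \<Rightarrow> real"
    have "(if (\<Sum>i\<in>I. (z i)\<^sup>2) < 1 - t\<^sup>2 then g * sqrt (\<Sum>i\<in>I. (z i)\<^sup>2) / ((1 - t\<^sup>2) * sqrt (1 - t\<^sup>2)) else 0)
        = k * (if (\<Sum>i\<in>I. (z i)\<^sup>2) < \<rho>\<^sup>2 then sqrt (\<Sum>i\<in>I. (z i)\<^sup>2) else 0)"
      using t2 by (simp add: k_def \<rho>_def)
    then show "ennreal (if (\<Sum>i\<in>I. (z i)\<^sup>2) < 1 - t\<^sup>2
             then g * sqrt (\<Sum>i\<in>I. (z i)\<^sup>2) / ((1 - t\<^sup>2) * sqrt (1 - t\<^sup>2)) else 0)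
        = ennreal k * ennreal (if (\<Sum>i\<in>I. (z i)\<^sup>2) < \<rho>\<^sup>2 then sqrt (\<Sum>i\<in>I. (z i)\<^sup>2) else 0)"
      using k by (simp add: ennreal_mult sum_nonneg)
  qed
  also have "\<dots> = ennreal k * (ennreal (\<rho> ^ (card I + 1)) * ball_norm_integral I)"
    by (subst nn_integral_cmult) (simp_all add: ball_norm_integral_scale[OF I \<rho>(1)])
  also have "\<dots> = ennreal (k * \<rho> ^ (card I + 1)) * ball_norm_integral I"
    using k \<rho> by (simp add: ennreal_mult' mult.assoc)
  also have "k * \<rho> ^ (card I + 1) = g * (\<rho> ^ (card I + 1) / ((1 - t\<^sup>2) * \<rho>))"
    by (simp add: k_def)
  also have "\<rho> ^ (card I + 1) / ((1 - t\<^sup>2) * \<rho>) = indicator {-1<..<1} t * (1 - t\<^sup>2) powr ((real (card I) - 2) / 2)"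
    using sqrt_power_div_eq_powr[OF True, of "card I + 1"] True
    by (simp add: \<rho>_def abs_less_iff)
  finally show ?thesis .
qed

lemma nn_integral_punctured_ball_cosine_split_Basis:
  fixes u :: "'a::euclidean_space" and G :: "real \<Rightarrow> real"
  assumes u: "u \<in> Basis" and I: "Basis - {u} \<noteq> {}"
    and G[measurable]: "G \<in> borel_measurable borel" and G0: "\<And>t. 0 \<le> G t"
  shows "(\<integral>\<^sup>+x. ennreal (indicator (ball 0 1 - {0}) x * G ((u \<bullet> x) / norm x)) \<partial>lborel) =
    (\<integral>\<^sup>+z. (\<integral>\<^sup>+t. ennreal (if (\<Sum>b\<in>Basis - {u}. (z b)\<^sup>2) < 1 - t\<^sup>2
        then G t * sqrt (\<Sum>b\<in>Basis - {u}. (z b)\<^sup>2) / ((1 - t\<^sup>2) * sqrt (1 - t\<^sup>2)) else 0) \<partial>lborel)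
      \<partial>PiM (Basis - {u}) (\<lambda>_. lborel))"
proof -
  let ?y = "\<lambda>z. \<Sum>b\<in>Basis - {u}. z b *\<^sub>R b" and ?Q = "\<lambda>z. \<Sum>b\<in>Basis - {u}. (z b)\<^sup>2"
  have [measurable]: "ball 0 1 - {0} \<in> sets (borel :: 'a measure)"
    by auto
  have "(\<integral>\<^sup>+x. ennreal (indicator (ball 0 1 - {0}) x * G ((u \<bullet> x) / norm x)) \<partial>lborel)
     = (\<integral>\<^sup>+z. (\<integral>\<^sup>+s. ennreal (indicator (ball 0 1 - {0}) (s *\<^sub>R u + ?y z)
          * G ((u \<bullet> (s *\<^sub>R u + ?y z)) / norm (s *\<^sub>R u + ?y z))) \<partial>lborel) \<partial>PiM (Basis - {u}) (\<lambda>_. lborel))"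
    using u by (rule nn_integral_lborel_split_Basis) measurable
  also have "\<dots> = (\<integral>\<^sup>+z. (\<integral>\<^sup>+s. ennreal (indicator {s. s\<^sup>2 + ?Q z < 1} s * G (s / sqrt (s\<^sup>2 + ?Q z)))
      \<partial>lborel) \<partial>PiM (Basis - {u}) (\<lambda>_. lborel))"
  proof (rule nn_integral_cong_AE)
    from AE_PiM_lborel_sum_squares_pos[OF finite_Diff[OF finite_Basis] I]
    show "AE z in PiM (Basis - {u}) (\<lambda>_. lborel).
        (\<integral>\<^sup>+s. ennreal (indicator (ball 0 1 - {0}) (s *\<^sub>R u + ?y z)
          * G ((u \<bullet> (s *\<^sub>R u + ?y z)) / norm (s *\<^sub>R u + ?y z))) \<partial>lborel)
      = (\<integral>\<^sup>+s. ennreal (indicator {s. s\<^sup>2 + ?Q z < 1} s * G (s / sqrt (s\<^sup>2 + ?Q z))) \<partial>lborel)"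
    proof eventually_elim
      case (elim z)
      have "s *\<^sub>R u + ?y z \<in> ball 0 1 - {0} \<longleftrightarrow> s\<^sup>2 + ?Q z < 1" for s
      proof -
        have "0 < s\<^sup>2 + ?Q z"
          using elim by (simp add: add_nonneg_pos)
        then have "s *\<^sub>R u + ?y z \<noteq> 0"
          using inner_norm_split_Basis(2)[OF u, of s z] by (metis less_irrefl norm_zero real_sqrt_eq_zero_cancel_iff)
        then show ?thesis
          by (simp add: inner_norm_split_Basis[OF u])
      qed
      then show ?case
        by (intro nn_integral_cong) (simp add: inner_norm_split_Basis[OF u] indicator_def)
    qed
  qed
  also have "\<dots> = (\<integral>\<^sup>+z. (\<integral>\<^sup>+t. ennreal (if ?Q z < 1 - t\<^sup>2 then G t * sqrt (?Q z) / ((1 - t\<^sup>2) * sqrt (1 - t\<^sup>2)) else 0)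
      \<partial>lborel) \<partial>PiM (Basis - {u}) (\<lambda>_. lborel))"
    using AE_PiM_lborel_sum_squares_pos[OF finite_Diff[OF finite_Basis] I]
    by (intro nn_integral_cong_AE) (auto elim!: eventually_mono simp: nn_integral_cosine_substitution[OF G G0])
  finally show ?thesis .
qed

lemma nn_integral_punctured_ball_cosine_Basis:
  fixes u :: "'a::euclidean_space" and G :: "real \<Rightarrow> real"
  assumes u: "u \<in> Basis" and dim: "DIM('a) \<ge> 2"
    and G[measurable]: "G \<in> borel_measurable borel" and G0: "\<And>t. 0 \<le> G t"
  shows "(\<integral>\<^sup>+x. ennreal (indicator (ball 0 1 - {0}) x * G ((u \<bullet> x) / norm x)) \<partial>lborel) =
     ball_norm_integral (Basis - {u}) *
       (\<integral>\<^sup>+t. ennreal (G t * (indicator {-1<..<1} t * (1 - t\<^sup>2) powr ((real DIM('a) - 3) / 2))) \<partial>lborel)"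
proof -
  define I where "I = Basis - {u}"
  have I: "finite I" "I \<noteq> {}" "real DIM('a) - 3 = real (card I) - 2"
    using u dim card_mono[of "{u}" "Basis :: 'a set"] by (auto simp: I_def card_Diff_singleton)
  interpret product_sigma_finite "\<lambda>_::'a. lborel :: real measure" by standard
  interpret FP: finite_product_sigma_finite "\<lambda>_::'a. lborel :: real measure" I by standard (rule I(1))
  interpret P: pair_sigma_finite "PiM I (\<lambda>_. lborel :: real measure)" "lborel :: real measure"
    unfolding pair_sigma_finite_def using FP.sigma_finite_measure_axioms lborel.sigma_finite_measure_axioms by simp
  define H where "H z t = ennreal (if (\<Sum>b\<in>I. (z b)\<^sup>2) < 1 - t\<^sup>2
    then G t * sqrt (\<Sum>b\<in>I. (z b)\<^sup>2) / ((1 - t\<^sup>2) * sqrt (1 - t\<^sup>2)) else 0)" for z t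
  have [measurable]: "case_prod H \<in> borel_measurable (PiM I (\<lambda>_. lborel) \<Otimes>\<^sub>M lborel)"
    unfolding H_def by measurable
  have "(\<integral>\<^sup>+x. ennreal (indicator (ball 0 1 - {0}) x * G ((u \<bullet> x) / norm x)) \<partial>lborel)
     = (\<integral>\<^sup>+z. (\<integral>\<^sup>+t. H z t \<partial>lborel) \<partial>PiM I (\<lambda>_. lborel))"
    unfolding H_def I_def using I by (intro nn_integral_punctured_ball_cosine_split_Basis[OF u _ G G0]) (simp add: I_def)
  also have "\<dots> = (\<integral>\<^sup>+t. (\<integral>\<^sup>+z. H z t \<partial>PiM I (\<lambda>_. lborel)) \<partial>lborel)"
    by (rule P.Fubini'[symmetric]) measurable
  also have "\<dots> = (\<integral>\<^sup>+t. ennreal (G t * (indicator {-1<..<1} t * (1 - t\<^sup>2) powr ((real DIM('a) - 3) / 2)))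
      * ball_norm_integral I \<partial>lborel)"
    unfolding H_def I(3) using I G0 by (simp add: nn_integral_PiM_cone_section)
  also have "\<dots> = ball_norm_integral I *
      (\<integral>\<^sup>+t. ennreal (G t * (indicator {-1<..<1} t * (1 - t\<^sup>2) powr ((real DIM('a) - 3) / 2))) \<partial>lborel)"
    by (subst nn_integral_multc) (auto simp: mult.commute)
  finally show ?thesis by (simp add: I_def)
qed

lemma nn_integral_punctured_ball_cosine:
  fixes m u :: "'a::euclidean_space" and G :: "real \<Rightarrow> real"
  assumes u: "u \<in> Basis" and dim: "DIM('a) \<ge> 2" and m: "norm m = 1"
    and G[measurable]: "G \<in> borel_measurable borel" and G0: "\<And>t. 0 \<le> G t"
  shows "(\<integral>\<^sup>+x. ennreal (indicator (ball 0 1 - {0}) x * G ((m \<bullet> x) / norm x)) \<partial>lborel) =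
     ball_norm_integral (Basis - {u}) *
       (\<integral>\<^sup>+t. ennreal (G t * (indicator {-1<..<1} t * (1 - t\<^sup>2) powr ((real DIM('a) - 3) / 2))) \<partial>lborel)"
proof -
  obtain g where "lborel_preserving_orthogonal g" "g (norm m *\<^sub>R u) = m"
    using lborel_preserving_orthogonal_onto[OF u dim] .
  then have g: "orthogonal_transformation g" "distr lborel borel g = lborel" "g (norm m *\<^sub>R u) = m"
    by (simp_all add: lborel_preserving_orthogonal_def)
  have [measurable]: "g \<in> borel_measurable borel" "ball 0 1 - {0} \<in> sets (borel :: 'a measure)"
    using g(1) by (auto intro: borel_measurable_orthogonal_transformation)
  have "m = g u"
    using g(3) m by simp
  then have "m \<bullet> g x = u \<bullet> x" for x
    using g(1) by (simp add: orthogonal_transformation_def)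
  moreover have "norm (g x) = norm x" for x
    using g(1) by (rule orthogonal_transformation_norm)
  moreover from this have "g x = 0 \<longleftrightarrow> x = 0" for x
    by (metis norm_eq_zero)
  ultimately have "(\<integral>\<^sup>+x. ennreal (indicator (ball 0 1 - {0}) x * G ((m \<bullet> x) / norm x)) \<partial>lborel)
      = (\<integral>\<^sup>+x. ennreal (indicator (ball 0 1 - {0}) x * G ((u \<bullet> x) / norm x)) \<partial>lborel)"
    by (subst (1) g(2)[symmetric]) (simp add: nn_integral_distr indicator_def)
  then show ?thesis
    using nn_integral_punctured_ball_cosine_Basis[OF u dim G G0] by simp
qed

section \<open>Projections of the surface measure of the sphere\<close>

lemma sets_sphere_measure:
  "sets (sphere_measure :: (real^'n) measure) = sets (restrict_space borel (sphere 0 1))"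
  by (simp add: sphere_measure_def)

lemma measurable_inner_sphere_measure [measurable]:
  "(\<lambda>x. \<mu> \<bullet> x) \<in> borel_measurable (sphere_measure :: (real^'n) measure)"
  by (simp add: measurable_cong_sets[OF sets_sphere_measure refl] measurable_restrict_space1)

lemma nn_integral_sphere_measure:
  assumes g: "g \<in> borel_measurable (sphere_measure :: (real^'n) measure)"
  shows "(\<integral>\<^sup>+x. g x \<partial>sphere_measure) =
         ennreal (real CARD('n)) * (\<integral>\<^sup>+x. g (x /\<^sub>R norm x) * indicator (ball 0 1 - {0}) x \<partial>lborel)"
proof -
  let ?\<Omega> = "ball (0::real^'n) 1 - {0}"
  let ?N = "distr (restrict_space lborel ?\<Omega>) (restrict_space borel (sphere 0 1)) (\<lambda>x. x /\<^sub>R norm x)"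
  have gS: "g \<in> borel_measurable (restrict_space borel (sphere (0::real^'n) 1))"
    using g by (simp add: measurable_cong_sets[OF sets_sphere_measure refl])
  have N: "(\<lambda>x. x /\<^sub>R norm x) \<in> measurable (restrict_space lborel ?\<Omega>) (restrict_space borel (sphere 0 1))"
    by (intro measurable_restrict_space2 measurable_restrict_space1) (auto simp: space_restrict_space)
  have "(\<integral>\<^sup>+x. g x \<partial>sphere_measure) = (\<integral>\<^sup>+x. ennreal (real CARD('n)) * g x \<partial>?N)"
    unfolding sphere_measure_def using gS by (subst nn_integral_density) auto
  also have "\<dots> = ennreal (real CARD('n)) * (\<integral>\<^sup>+x. g x \<partial>?N)"
    using gS by (subst nn_integral_cmult) auto
  also have "(\<integral>\<^sup>+x. g x \<partial>?N) = (\<integral>\<^sup>+x. g (x /\<^sub>R norm x) \<partial>restrict_space lborel ?\<Omega>)"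
    using gS N by (subst nn_integral_distr) auto
  also have "\<dots> = (\<integral>\<^sup>+x. g (x /\<^sub>R norm x) * indicator ?\<Omega> x \<partial>lborel)"
    by (rule nn_integral_restrict_space) auto
  finally show ?thesis .
qed

lemma distr_inner_density_sphere_measure:
  fixes \<mu> :: "real^'n" and f :: "real \<Rightarrow> real"
  assumes n: "CARD('n) \<ge> 2" and \<mu>: "norm \<mu> = 1"
    and f[measurable]: "f \<in> borel_measurable borel" and f0: "\<And>t. 0 \<le> f t"
  obtains C where "distr (density sphere_measure (\<lambda>x. ennreal (f (\<mu> \<bullet> x)))) borel (\<lambda>x. \<mu> \<bullet> x)
    = density lborel (\<lambda>t. C * ennreal (f t * (indicator {-1<..<1} t * (1 - t\<^sup>2) powr ((real CARD('n) - 3) / 2))))"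
proof -
  obtain u :: "real^'n" where u: "u \<in> Basis"
    using nonempty_Basis by blast
  define C where "C = ennreal (real CARD('n)) * ball_norm_integral (Basis - {u})"
  define h where "h t = ennreal (f t * (indicator {-1<..<1} t * (1 - t\<^sup>2) powr ((real CARD('n) - 3) / 2)))" for t
  have [measurable]: "h \<in> borel_measurable borel"
    unfolding h_def by measurable
  have "emeasure (distr (density sphere_measure (\<lambda>x. ennreal (f (\<mu> \<bullet> x)))) borel (\<lambda>x. \<mu> \<bullet> x)) A
      = emeasure (density lborel (\<lambda>t. C * h t)) A"
    if A[measurable]: "A \<in> sets borel" for A
  proof -
    have G: "(\<lambda>t. f t * indicator A t) \<in> borel_measurable borel"
      by measurable
    have "emeasure (distr (density sphere_measure (\<lambda>x. ennreal (f (\<mu> \<bullet> x)))) borel (\<lambda>x. \<mu> \<bullet> x)) A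
        = (\<integral>\<^sup>+x. indicator A (\<mu> \<bullet> x) \<partial>density sphere_measure (\<lambda>x. ennreal (f (\<mu> \<bullet> x))))"
      by (simp add: nn_integral_distr flip: nn_integral_indicator)
    also have "\<dots> = (\<integral>\<^sup>+x. ennreal (f (\<mu> \<bullet> x) * indicator A (\<mu> \<bullet> x)) \<partial>sphere_measure)"
      by (subst nn_integral_density) (auto simp: f0 ennreal_mult' ennreal_indicator)
    also have "\<dots> = ennreal (real CARD('n)) * (\<integral>\<^sup>+x. ennreal (f (\<mu> \<bullet> (x /\<^sub>R norm x)) * indicator A (\<mu> \<bullet> (x /\<^sub>R norm x)))
        * indicator (ball 0 1 - {0}) x \<partial>lborel)"
      by (rule nn_integral_sphere_measure) measurable
    also have "(\<integral>\<^sup>+x. ennreal (f (\<mu> \<bullet> (x /\<^sub>R norm x)) * indicator A (\<mu> \<bullet> (x /\<^sub>R norm x)))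
        * indicator (ball 0 1 - {0}) x \<partial>lborel)
      = (\<integral>\<^sup>+x. ennreal (indicator (ball 0 1 - {0}) x * (f (\<mu> \<bullet> x / norm x) * indicator A (\<mu> \<bullet> x / norm x))) \<partial>lborel)"
      by (intro nn_integral_cong) (simp add: divide_inverse_commute split: split_indicator)
    also have "\<dots> = ball_norm_integral (Basis - {u}) * (\<integral>\<^sup>+t. h t * indicator A t \<partial>lborel)"
      using nn_integral_punctured_ball_cosine[OF u _ \<mu> G] n f0
      by (simp add: h_def mult_ac ennreal_mult' ennreal_indicator)
    finally have "emeasure (distr (density sphere_measure (\<lambda>x. ennreal (f (\<mu> \<bullet> x)))) borel (\<lambda>x. \<mu> \<bullet> x)) A
        = C * (\<integral>\<^sup>+t. h t * indicator A t \<partial>lborel)"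
      by (simp add: C_def mult.assoc)
    also have "\<dots> = (\<integral>\<^sup>+t. C * h t * indicator A t \<partial>lborel)"
      by (simp add: nn_integral_cmult mult.assoc)
    also have "\<dots> = emeasure (density lborel (\<lambda>t. C * h t)) A"
      by (rule emeasure_density[symmetric]) measurable
    finally show ?thesis .
  qed
  then show ?thesis
    by (intro that[of C] measure_eqI) (auto simp: h_def)
qed

lemma distr_inner_distributed_sphere_measure:
  fixes X :: "'w \<Rightarrow> real^'n" and f :: "real \<Rightarrow> real"
  assumes "CARD('n) \<ge> 2" "norm \<mu> = 1" "f \<in> borel_measurable borel" "\<And>t. 0 \<le> f t"
    and X: "distributed M sphere_measure X (\<lambda>x. ennreal (f (\<mu> \<bullet> x)))"
  obtains C where "distr M borel (\<lambda>\<omega>. \<mu> \<bullet> X \<omega>)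
    = density lborel (\<lambda>t. C * ennreal (f t * (indicator {-1<..<1} t * (1 - t\<^sup>2) powr ((real CARD('n) - 3) / 2))))"
proof -
  have [measurable]: "X \<in> measurable M sphere_measure"
    using X by (simp add: distributed_def)
  then have "distr M borel (\<lambda>\<omega>. \<mu> \<bullet> X \<omega>) = distr (distr M sphere_measure X) borel (\<lambda>x. \<mu> \<bullet> x)"
    by (simp add: distr_distr comp_def)
  also have "\<dots> = distr (density sphere_measure (\<lambda>x. ennreal (f (\<mu> \<bullet> x)))) borel (\<lambda>x. \<mu> \<bullet> x)"
    using X by (simp add: distributed_def)
  moreover obtain C where "distr (density sphere_measure (\<lambda>x. ennreal (f (\<mu> \<bullet> x)))) borel (\<lambda>x. \<mu> \<bullet> x)
    = density lborel (\<lambda>t. C * ennreal (f t * (indicator {-1<..<1} t * (1 - t\<^sup>2) powr ((real CARD('n) - 3) / 2))))"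
    by (rule distr_inner_density_sphere_measure[OF assms(1-4)])
  ultimately show ?thesis
    by (intro that) simp
qed

section \<open>Affine images of Beta distributions\<close>

lemma Beta_real_pos: "0 < a \<Longrightarrow> 0 < b \<Longrightarrow> 0 < Beta a (b::real)"
  by (simp add: Beta_def Gamma_real_pos)

lemma sets_beta_measure [measurable_cong]: "sets (beta_measure a b) = sets borel"
  by (simp add: beta_measure_def)

lemma beta_density_measurable [measurable]: "beta_density a b \<in> borel_measurable borel"
  unfolding beta_density_def by measurable

lemma prob_space_beta_measure:
  assumes a: "0 < a" and b: "0 < b"
  shows "prob_space (beta_measure a b)"
proof
  have "((\<lambda>z. z powr (a-1) * (1-z) powr (b-1)) has_integral Beta a b) {0<..<1}"
    using has_integral_Beta_real[OF a b] by (simp add: has_integral_Icc_iff_Ioo)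
  then have I: "(\<integral>\<^sup>+z. ennreal (z powr (a-1) * (1-z) powr (b-1)) * indicator {0<..<1} z \<partial>lborel) = ennreal (Beta a b)"
    by (intro nn_integral_has_integral_lebesgue') auto
  have B: "Beta a b > 0"
    using Beta_real_pos[OF a b] .
  have "emeasure (beta_measure a b) (space (beta_measure a b)) = (\<integral>\<^sup>+z. beta_density a b z \<partial>lborel)"
    by (simp add: beta_measure_def emeasure_density)
  also have "\<dots> = (\<integral>\<^sup>+z. ennreal (1 / Beta a b) * (ennreal (z powr (a-1) * (1-z) powr (b-1)) * indicator {0<..<1} z) \<partial>lborel)"
    using B by (intro nn_integral_cong) (auto simp: beta_density_def ennreal_mult'[symmetric] indicator_def)
  also have "\<dots> = ennreal (1 / Beta a b) * ennreal (Beta a b)"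
    by (subst nn_integral_cmult) (auto simp: I)
  also have "\<dots> = 1"
    using B by (simp flip: ennreal_mult')
  finally show "emeasure (beta_measure a b) (space (beta_measure a b)) = 1" .
qed

lemma powr_one_plus_mult_powr_one_minus:
  fixes t :: real
  assumes "-1 < t" "t < 1"
  shows "(1 + t) powr (k + e) * (1 - t) powr e = (1 + t) powr k * (1 - t\<^sup>2) powr e"
proof -
  have "(1 - t\<^sup>2) powr e = (1 + t) powr e * (1 - t) powr e"
    using assms by (simp add: powr_mult[symmetric] power2_eq_square algebra_simps)
  then show ?thesis
    by (simp add: powr_add)
qed

lemma distr_beta_measure_affine:
  assumes a: "0 < a" and b: "0 < b"
  shows "distr (beta_measure a b) borel (\<lambda>z. 2 * z - 1) = density lborel (\<lambda>t.
     ennreal (1 / (2 powr (a + b - 1) * Beta a b)) *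
     ennreal ((1 + t) powr (a - b) * (indicator {-1<..<1} t * (1 - t\<^sup>2) powr (b - 1))))"
    (is "_ = density lborel (\<lambda>t. ennreal ?K * ennreal (?g t))")
proof (rule measure_eqI)
  fix A :: "real set" assume "A \<in> sets (distr (beta_measure a b) borel (\<lambda>z. 2 * z - 1))"
  then have [measurable]: "A \<in> sets borel" by simp
  have B: "Beta a b > 0"
    using Beta_real_pos[OF a b] .
  have density_affine: "ennreal (1/2) * beta_density a b (1/2 + 1/2 * t) = ennreal ?K * ennreal (?g t)" for t :: real
  proof (cases "t \<in> {-1<..<1}")
    case True
    define \<beta> where "\<beta> = ((1 + t) / 2) powr (a - 1) * ((1 - t) / 2) powr (b - 1) / Beta a b"
    have "ennreal (1/2) * beta_density a b (1/2 + 1/2 * t) = ennreal (1/2) * ennreal \<beta>"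
      using True by (simp add: beta_density_def \<beta>_def add_divide_distrib diff_divide_distrib)
    also have "\<dots> = ennreal (1/2 * \<beta>)"
      using B by (intro ennreal_mult[symmetric]) (simp_all add: \<beta>_def)
    also have "1/2 * \<beta> = ?K * ?g t"
    proof -
      have "(2::real) powr (a + b - 1) = 2 powr (a - 1) * 2 powr (b - 1) * 2 powr 1"
        by (simp only: powr_add[symmetric]) simp
      then have "1/2 * \<beta> = (1 + t) powr (a - b + (b - 1)) * (1 - t) powr (b - 1) / (2 powr (a + b - 1) * Beta a b)"
        using True by (simp add: \<beta>_def powr_divide field_simps)
      then show ?thesis
        using True powr_one_plus_mult_powr_one_minus[of t "a - b" "b - 1"] by simp
    qed
    also have "ennreal (?K * ?g t) = ennreal ?K * ennreal (?g t)"
      using B by (intro ennreal_mult) simp_all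
    finally show ?thesis .
  qed (auto simp: beta_density_def)
  have "emeasure (distr (beta_measure a b) borel (\<lambda>z. 2 * z - 1)) A
      = (\<integral>\<^sup>+z. beta_density a b z * indicator A (2 * z - 1) \<partial>lborel)"
    by (simp add: beta_measure_def nn_integral_distr nn_integral_density flip: nn_integral_indicator)
  also have "\<dots> = ennreal (1/2) * (\<integral>\<^sup>+t. beta_density a b (1/2 + 1/2 * t) * indicator A t \<partial>lborel)"
    using nn_integral_real_affine[where f="\<lambda>z. beta_density a b z * indicator A (2 * z - 1)" and c="1/2" and t="1/2"]
    by (simp add: algebra_simps)
  also have "\<dots> = (\<integral>\<^sup>+t. ennreal (1/2) * (beta_density a b (1/2 + 1/2 * t) * indicator A t) \<partial>lborel)"
    by (rule nn_integral_cmult[symmetric]) measurable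
  also have "\<dots> = (\<integral>\<^sup>+t. ennreal ?K * ennreal (?g t) * indicator A t \<partial>lborel)"
    by (simp only: mult.assoc[symmetric] density_affine)
  also have "\<dots> = emeasure (density lborel (\<lambda>t. ennreal ?K * ennreal (?g t))) A"
    by (rule emeasure_density[symmetric]) measurable
  finally show "emeasure (distr (beta_measure a b) borel (\<lambda>z. 2 * z - 1)) A = \<dots>" .
qed simp

lemma density_cmult_eq_if_prob_space:
  assumes "prob_space (density M (\<lambda>x. a * f x))" "prob_space (density M (\<lambda>x. b * f x))"
    and f: "f \<in> borel_measurable M"
  shows "density M (\<lambda>x. a * f x) = density M (\<lambda>x. b * f x)"
proof -
  have total: "c * integral\<^sup>N M f = 1" if "prob_space (density M (\<lambda>x. c * f x))" for c
  proof -
    have "1 = emeasure (density M (\<lambda>x. c * f x)) (space M)"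
      using prob_space.emeasure_space_1[OF that] by simp
    also have "\<dots> = c * integral\<^sup>N M f"
      using f by (simp add: emeasure_density nn_integral_cmult)
    finally show ?thesis ..
  qed
  have "a = a * (b * integral\<^sup>N M f)"
    using total[OF assms(2)] by simp
  also have "\<dots> = b * (a * integral\<^sup>N M f)"
    by (simp add: mult_ac)
  also have "\<dots> = b"
    using total[OF assms(1)] by simp
  finally show ?thesis by simp
qed

definition power_spherical_marginal :: "real \<Rightarrow> real \<Rightarrow> real \<Rightarrow> real" where
  "power_spherical_marginal d \<kappa> t = (1 + t) powr \<kappa> * (indicator {-1<..<1} t * (1 - t\<^sup>2) powr ((d - 3) / 2))"

lemma borel_measurable_power_spherical_marginal [measurable]:
  "power_spherical_marginal d \<kappa> \<in> borel_measurable borel"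
  unfolding power_spherical_marginal_def[abs_def] by measurable

lemma distr_beta_measure_affine_power_spherical_marginal:
  fixes d \<kappa> :: real
  assumes d: "d \<ge> 2" and \<kappa>: "\<kappa> \<ge> 0"
  obtains K where "distr (beta_measure ((d - 1) / 2 + \<kappa>) ((d - 1) / 2)) borel (\<lambda>z. 2 * z - 1)
    = density lborel (\<lambda>t. K * ennreal (power_spherical_marginal d \<kappa> t))"
    and "prob_space (density lborel (\<lambda>t. K * ennreal (power_spherical_marginal d \<kappa> t)))"
proof -
  define a b where "a = (d - 1) / 2 + \<kappa>" and "b = (d - 1) / 2"
  have b: "0 < b"
    unfolding b_def using d by simp
  then have ab: "0 < a" "0 < b"
    using add_pos_nonneg[OF b \<kappa>] by (simp_all add: a_def b_def)
  have exponents: "a - b = \<kappa>" "b - 1 = (d - 3) / 2"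
    by (simp_all add: a_def b_def field_simps)
  have "distr (beta_measure a b) borel (\<lambda>z. 2 * z - 1)
      = density lborel (\<lambda>t. ennreal (1 / (2 powr (a + b - 1) * Beta a b)) * ennreal (power_spherical_marginal d \<kappa> t))"
    by (simp only: distr_beta_measure_affine[OF ab] exponents power_spherical_marginal_def)
  moreover have "prob_space (distr (beta_measure a b) borel (\<lambda>z. 2 * z - 1))"
    using prob_space_beta_measure[OF ab] by (rule prob_space.prob_space_distr) measurable
  ultimately show ?thesis
    using that by (simp add: a_def b_def)
qed

theorem theorem12:
  fixes M :: "'w measure"
    and X :: "'w \<Rightarrow> real^'n"
    and \<mu> :: "real^'n"
    and \<kappa> :: real
  assumes "CARD('n) \<ge> 2"
    and "norm \<mu> = 1"
    and "\<kappa> \<ge> 0"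
    and "prob_space M"
    and "\<exists>c>0. distributed M sphere_measure X
                 (\<lambda>x. ennreal (c * (1 + \<mu> \<bullet> x) powr \<kappa>))"
  shows "distr M borel (\<lambda>\<omega>. \<mu> \<bullet> X \<omega>)
         = distr (beta_measure ((real CARD('n) - 1) / 2 + \<kappa>) ((real CARD('n) - 1) / 2))
                 borel (\<lambda>z. 2 * z - 1)"
proof -
  interpret prob_space M by (rule assms(4))
  obtain c where c: "c > 0" and X: "distributed M sphere_measure X (\<lambda>x. ennreal (c * (1 + \<mu> \<bullet> x) powr \<kappa>))"
    using assms(5) by blast
  have [measurable]: "X \<in> measurable M sphere_measure"
    using X by (simp add: distributed_def)
  have "(\<lambda>t. c * (1 + t) powr \<kappa>) \<in> borel_measurable borel" "\<And>t. 0 \<le> c * (1 + t) powr \<kappa>"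
    using c by simp_all
  from distr_inner_distributed_sphere_measure[OF assms(1,2) this X]
  obtain C where "distr M borel (\<lambda>\<omega>. \<mu> \<bullet> X \<omega>) = density lborel (\<lambda>t. C * ennreal (c * (1 + t) powr \<kappa>
      * (indicator {-1<..<1} t * (1 - t\<^sup>2) powr ((real CARD('n) - 3) / 2))))" .
  then have law: "distr M borel (\<lambda>\<omega>. \<mu> \<bullet> X \<omega>)
      = density lborel (\<lambda>t. (C * ennreal c) * ennreal (power_spherical_marginal (real CARD('n)) \<kappa> t))"
    using c by (simp add: power_spherical_marginal_def ennreal_mult' mult.assoc)
  have d: "real CARD('n) \<ge> 2"
    using assms(1) by simp
  obtain K where beta: "distr (beta_measure ((real CARD('n) - 1) / 2 + \<kappa>) ((real CARD('n) - 1) / 2)) borel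
      (\<lambda>z. 2 * z - 1) = density lborel (\<lambda>t. K * ennreal (power_spherical_marginal (real CARD('n)) \<kappa> t))"
    and "prob_space (density lborel (\<lambda>t. K * ennreal (power_spherical_marginal (real CARD('n)) \<kappa> t)))"
    by (rule distr_beta_measure_affine_power_spherical_marginal[OF d assms(3)])
  moreover have "prob_space (distr M borel (\<lambda>\<omega>. \<mu> \<bullet> X \<omega>))"
    by (intro prob_space_distr) measurable
  ultimately show ?thesis
    unfolding law beta by (intro density_cmult_eq_if_prob_space) measurable
qed

end
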